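(* Let $q>0$, $q\neq1$, let $x(s)=c_1q^{s}+c_2q^{-s}+c_3$ with $q^{\mu}:=c_1/c_2$ (for a $q$-linear lattice see the convention in the context), let $\tilde\sigma,\tilde\tau$ be polynomials of degrees at most $2$ and $1$, $\sigma(s)=\tilde\sigma(x(s))-\tfrac12\tilde\tau(x(s))\Delta x(s-\tfrac12)$, $\tau(s)=\tilde\tau(x(s))$, and let $A(s)$ be a continuous non-vanishing function. Define $$H(s;q):=-\frac{\sqrt{\sigma(-s-\mu+1)\sigma(s)}}{\nabla x(s)}e^{-\partial_s}-\frac{\sqrt{\sigma(-s-\mu)\sigma(s+1)}}{\Delta x(s)}e^{\partial_s}+\left(\frac{\sigma(-s-\mu)}{\Delta x(s)}+\frac{\sigma(s)}{\nabla x(s)}\right)I,\qquad \mathfrak H(s;q):=\frac{1}{\nabla x_1(s)}A(s)H(s;q)\frac{1}{A(s)},$$ and for real $\alpha$ $$a(s;q):=\mathfrak a^{\downarrow}_\alpha(s;q)=\frac{A(s)}{\sqrt{\nabla x_1(s)}}e^{-\alpha\partial_s}\left(e^{\partial_s}\sqrt{\frac{\sigma(s)}{\nabla x(s)}}-\sqrt{\frac{\sigma(-s-\mu)}{\Delta x(s)}}\right)\frac{1}{A(s)},$$ $$b(s;q):=\mathfrak a^{\uparrow}_\alpha(s;q)=\frac{1}{\nabla x_1(s)}A(s)\left(\sqrt{\frac{\sigma(s)}{\nabla x(s)}}e^{-\partial_s}-\sqrt{\frac{\sigma(-s-\mu)}{\Delta x(s)}}\right)e^{\alpha\partial_s}\frac{\sqrt{\nabla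 x_1(s)}}{A(s)}.$$ These operators factorize $\mathfrak H(s;q)=b(s;q)a(s;q)$, and, for real numbers $\varsigma$ and $\Lambda$, they satisfy $a(s;q)b(s;q)-\varsigma\, b(s;q)a(s;q)=\Lambda I$ if and only if the following two conditions hold identically in $s$: $$\frac{\nabla x(s)}{\nabla x_1(s-\alpha)}\sqrt{\frac{\nabla x_1(s-1)\nabla x_1(s)}{\nabla x(s-\alpha)\Delta x(s-\alpha)}}\sqrt{\frac{\sigma(s-\alpha)\sigma(-s-\mu+\alpha)}{\sigma(s)\sigma(-s-\mu+1)}}=\varsigma,$$ and $$\frac{1}{\Delta x(s-\alpha)}\left(\frac{\sigma(s-\alpha+1)}{\nabla x_1(s-\alpha+1)}+\frac{\sigma(-s-\mu+\alpha)}{\nabla x_1(s-\alpha)}\right)-\varsigma\,\frac{1}{\nabla x_1(s)}\left(\frac{\sigma(s)}{\nabla x(s)}+\frac{\sigma(-s-\mu)}{\Delta x(s)}\right)=\Lambda.$$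
   Context: Notation: $\Delta f(s)=f(s+1)-f(s)$, $\nabla f(s)=f(s)-f(s-1)$; $x_1(s):=x(s+\tfrac12)$; $e^{\beta\partial_s}f(s)=f(s+\beta)$; functions inside operator products act as multiplication operators and products are compositions; $I$ is the identity. Convention: for a $q$-linear lattice $x(s)=c\,q^{\pm s}+c_3$, each $\sigma(-s-\mu+\beta)$ is read as $\sigma(t)+\tau(t)\Delta x(t-\tfrac12)$ at $t=s-\beta$. Square roots are taken formally with fixed branches. *)

theory Defs
  imports "HOL-Analysis.Analysis" "HOL-Computational_Algebra.Polynomial"
begin

type_synonym op = "(real \<Rightarrow> complex) \<Rightarrow> (real \<Rightarrow> complex)"

definition qpow :: "real \<Rightarrow> complex \<Rightarrow> complex" where
  "qpow q z = exp (z * complex_of_real (ln q))"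

definition latx :: "real \<Rightarrow> real \<Rightarrow> real \<Rightarrow> real \<Rightarrow> complex \<Rightarrow> complex" where
  "latx q c1 c2 c3 z = of_real c1 * qpow q z + of_real c2 * qpow q (- z) + of_real c3"

text \<open>mu with q^mu = c1/c2 (some complex solution; principal logarithm).\<close>
definition qmu :: "real \<Rightarrow> real \<Rightarrow> real \<Rightarrow> complex" where
  "qmu q c1 c2 = Ln (complex_of_real (c1 / c2)) / complex_of_real (ln q)"

definition sigc :: "real poly \<Rightarrow> real poly \<Rightarrow> (complex \<Rightarrow> complex) \<Rightarrow> complex \<Rightarrow> complex" where
  "sigc st tt X z = poly (map_poly of_real st) (X z)
     - 1/2 * poly (map_poly of_real tt) (X z) * (X (z + 1/2) - X (z - 1/2))"

definition tauc :: "real poly \<Rightarrow> (complex \<Rightarrow> complex) \<Rightarrow> complex \<Rightarrow> complex" where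
  "tauc tt X z = poly (map_poly of_real tt) (X z)"

definition Dx :: "(complex \<Rightarrow> complex) \<Rightarrow> real \<Rightarrow> complex" where
  "Dx X s = X (of_real (s + 1)) - X (of_real s)"
definition Nx :: "(complex \<Rightarrow> complex) \<Rightarrow> real \<Rightarrow> complex" where
  "Nx X s = X (of_real s) - X (of_real (s - 1))"
text \<open>x_1(s) = x(s+1/2) and nabla x_1(s) = x_1(s) - x_1(s-1).\<close>
definition Nx1 :: "(complex \<Rightarrow> complex) \<Rightarrow> real \<Rightarrow> complex" where
  "Nx1 X s = X (of_real (s + 1/2)) - X (of_real (s - 1/2))"

definition sig :: "real poly \<Rightarrow> real poly \<Rightarrow> real \<Rightarrow> real \<Rightarrow> real \<Rightarrow> real \<Rightarrow> real \<Rightarrow> complex" where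
  "sig st tt q c1 c2 c3 s = sigc st tt (latx q c1 c2 c3) (of_real s)"

text \<open>The reflected sigma, i.e. sigma(-s-mu) at real s; for a q-linear lattice
  (exactly one of c1, c2 zero) it is read as sigma(s) + tau(s) Delta x(s - 1/2).
  sigma(-s-mu+beta) is then sigref(s - beta).\<close>
definition sigref :: "real poly \<Rightarrow> real poly \<Rightarrow> real \<Rightarrow> real \<Rightarrow> real \<Rightarrow> real \<Rightarrow> real \<Rightarrow> complex" where
  "sigref st tt q c1 c2 c3 s =
     (if c1 \<noteq> 0 \<and> c2 \<noteq> 0
      then sigc st tt (latx q c1 c2 c3) (- complex_of_real s - qmu q c1 c2)
      else sigc st tt (latx q c1 c2 c3) (of_real s)
           + tauc tt (latx q c1 c2 c3) (of_real s) * Dx (latx q c1 c2 c3) (s - 1/2))"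

definition Esh :: "real \<Rightarrow> op" where
  "Esh \<beta> f = (\<lambda>s. f (s + \<beta>))"
definition opadd :: "op \<Rightarrow> op \<Rightarrow> op" (infixl "\<oplus>\<^sub>o" 65) where
  "opadd T1 T2 = (\<lambda>f s. T1 f s + T2 f s)"
definition opsub :: "op \<Rightarrow> op \<Rightarrow> op" (infixl "\<ominus>\<^sub>o" 65) where
  "opsub T1 T2 = (\<lambda>f s. T1 f s - T2 f s)"
definition opneg :: "op \<Rightarrow> op" where
  "opneg T = (\<lambda>f s. - T f s)"
definition Mul :: "(real \<Rightarrow> complex) \<Rightarrow> op" where
  "Mul g f = (\<lambda>s. g s * f s)"

text \<open>Square roots are formal with fixed branches: Rs, Rm, Rd, Rw are
  fixed square roots of sigma(s), sigma(-s-mu), Delta x(s), nabla x_1(s); the square root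
  of a product/quotient of such factors is the corresponding product/quotient of roots.
  sg = sigma, sr = sigma(-s-mu), dx = Delta x, nx = nabla x, w = nabla x_1.\<close>
definition Hop :: "(real \<Rightarrow> complex) \<Rightarrow> (real \<Rightarrow> complex) \<Rightarrow> (real \<Rightarrow> complex) \<Rightarrow> (real \<Rightarrow> complex)
   \<Rightarrow> (real \<Rightarrow> complex) \<Rightarrow> (real \<Rightarrow> complex) \<Rightarrow> op" where
  "Hop sg sr dx nx Rs Rm =
     opneg (Mul (\<lambda>s. Rm (s - 1) * Rs s / nx s) \<circ> Esh (-1))
     \<ominus>\<^sub>o (Mul (\<lambda>s. Rm s * Rs (s + 1) / dx s) \<circ> Esh 1)
     \<oplus>\<^sub>o Mul (\<lambda>s. sr s / dx s + sg s / nx s)"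

definition frakH :: "(real \<Rightarrow> complex) \<Rightarrow> (real \<Rightarrow> complex) \<Rightarrow> (real \<Rightarrow> complex) \<Rightarrow> (real \<Rightarrow> complex)
   \<Rightarrow> (real \<Rightarrow> complex) \<Rightarrow> (real \<Rightarrow> complex) \<Rightarrow> (real \<Rightarrow> complex) \<Rightarrow> (real \<Rightarrow> real) \<Rightarrow> op" where
  "frakH sg sr dx nx w Rs Rm A =
     Mul (\<lambda>s. 1 / w s) \<circ> Mul (\<lambda>s. of_real (A s)) \<circ> Hop sg sr dx nx Rs Rm
       \<circ> Mul (\<lambda>s. 1 / of_real (A s))"

text \<open>Lowering operator a^down_alpha; sqrt(sigma(s)/nabla x(s)) = Rs s / Rd (s-1),
  sqrt(sigma(-s-mu)/Delta x(s)) = Rm s / Rd s, sqrt(nabla x_1(s)) = Rw s.\<close>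
definition aop :: "real \<Rightarrow> (real \<Rightarrow> complex) \<Rightarrow> (real \<Rightarrow> complex) \<Rightarrow> (real \<Rightarrow> complex)
   \<Rightarrow> (real \<Rightarrow> complex) \<Rightarrow> (real \<Rightarrow> real) \<Rightarrow> op" where
  "aop \<alpha> Rs Rm Rd Rw A =
     Mul (\<lambda>s. of_real (A s) / Rw s) \<circ> Esh (- \<alpha>)
       \<circ> ((Esh 1 \<circ> Mul (\<lambda>s. Rs s / Rd (s - 1))) \<ominus>\<^sub>o Mul (\<lambda>s. Rm s / Rd s))
       \<circ> Mul (\<lambda>s. 1 / of_real (A s))"

definition bop :: "real \<Rightarrow> (real \<Rightarrow> complex) \<Rightarrow> (real \<Rightarrow> complex) \<Rightarrow> (real \<Rightarrow> complex)
   \<Rightarrow> (real \<Rightarrow> complex) \<Rightarrow> (real \<Rightarrow> complex) \<Rightarrow> (real \<Rightarrow> real) \<Rightarrow> op" where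
  "bop \<alpha> w Rs Rm Rd Rw A =
     Mul (\<lambda>s. 1 / w s) \<circ> Mul (\<lambda>s. of_real (A s))
       \<circ> ((Mul (\<lambda>s. Rs s / Rd (s - 1)) \<circ> Esh (-1)) \<ominus>\<^sub>o Mul (\<lambda>s. Rm s / Rd s))
       \<circ> Esh \<alpha> \<circ> Mul Rw \<circ> Mul (\<lambda>s. 1 / of_real (A s))"

text \<open>Points where all the data are non-degenerate, and the maximal set of s whose
  whole orbit s + Z + alpha Z is non-degenerate ("identically in s").\<close>
definition nondeg :: "(real \<Rightarrow> complex) \<Rightarrow> (real \<Rightarrow> complex) \<Rightarrow> (real \<Rightarrow> complex)
   \<Rightarrow> (real \<Rightarrow> complex) \<Rightarrow> real \<Rightarrow> bool" where
  "nondeg sg sr dx w t \<longleftrightarrow> sg t \<noteq> 0 \<and> sr t \<noteq> 0 \<and> dx t \<noteq> 0 \<and> w t \<noteq> 0"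

definition gooddom :: "real \<Rightarrow> (real \<Rightarrow> complex) \<Rightarrow> (real \<Rightarrow> complex) \<Rightarrow> (real \<Rightarrow> complex)
   \<Rightarrow> (real \<Rightarrow> complex) \<Rightarrow> real set" where
  "gooddom \<alpha> sg sr dx w =
     {s. \<forall>m n :: int. nondeg sg sr dx w (s + of_int m + of_int n * \<alpha>)}"

end

theory Submission imports Defs begin

text \<open>
  Both \<open>b a\<close> and \<open>a b\<close> are three-term difference operators: expanding the shifts, each
  sends \<open>f\<close> to a combination of \<open>f(s-1)\<close>, \<open>f(s)\<close>, \<open>f(s+1)\<close> whose coefficients are
  products of the square roots.  For \<open>b a\<close> these coefficients are exactly those of \<open>\<frak>H\<close>,
  once \<open>\<nabla>x(s) = \<Delta>x(s-1)\<close> and the squares of the roots are substituted.  For \<open>a b\<close>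
  the off-diagonal coefficients are those of \<open>b a\<close> multiplied by the ratio on the left of
  the first condition (at \<open>s\<close> and at \<open>s+1\<close>).  A three-term operator acts as \<open>\<Lambda> I\<close>
  on all functions iff its off-diagonal coefficients vanish and its diagonal one is \<open>\<Lambda>\<close>,
  as one sees by testing on point masses; this gives the two conditions.
\<close>

definition tridiag :: "(real \<Rightarrow> complex) \<Rightarrow> (real \<Rightarrow> complex) \<Rightarrow> (real \<Rightarrow> complex) \<Rightarrow> op" where
  "tridiag p d r f s = p s * f (s - 1) + d s * f s + r s * f (s + 1)"

lemma tridiag_eq_scalar_iff:
  "(\<forall>f. \<forall>s\<in>D. tridiag p d r f s = c * f s) \<longleftrightarrow> (\<forall>s\<in>D. p s = 0 \<and> d s = c \<and> r s = 0)"
proof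
  assume scalar: "\<forall>f. \<forall>s\<in>D. tridiag p d r f s = c * f s"
  show "\<forall>s\<in>D. p s = 0 \<and> d s = c \<and> r s = 0"
  proof
    fix s assume "s \<in> D"
    let ?\<delta> = "\<lambda>t u. if u = t then 1 else 0 :: complex"
    have "tridiag p d r (?\<delta> t) s = c * ?\<delta> t s" for t
      using scalar \<open>s \<in> D\<close> by blast
    from this[of "s - 1"] this[of s] this[of "s + 1"]
    show "p s = 0 \<and> d s = c \<and> r s = 0" by (simp add: tridiag_def)
  qed
qed (simp add: tridiag_def)

lemma gooddom_nondeg:
  "s \<in> gooddom \<alpha> sg sr dx w \<Longrightarrow> nondeg sg sr dx w (s + of_int m + of_int n * \<alpha>)"
  by (simp add: gooddom_def)

lemma gooddom_add_one: "s \<in> gooddom \<alpha> sg sr dx w \<Longrightarrow> s + 1 \<in> gooddom \<alpha> sg sr dx w"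
proof -
  assume s: "s \<in> gooddom \<alpha> sg sr dx w"
  have "nondeg sg sr dx w (s + 1 + of_int m + of_int n * \<alpha>)" for m n :: int
    using gooddom_nondeg[OF s, of "m + 1" n] by (simp add: algebra_simps)
  then show ?thesis by (simp add: gooddom_def)
qed

lemma aop_apply:
  "aop \<alpha> Rs Rm Rd Rw A f t = of_real (A t) / Rw t *
     (Rs (t-\<alpha>+1) / Rd (t-\<alpha>) * f (t-\<alpha>+1) / of_real (A (t-\<alpha>+1))
      - Rm (t-\<alpha>) / Rd (t-\<alpha>) * f (t-\<alpha>) / of_real (A (t-\<alpha>)))"
  by (simp add: aop_def Mul_def Esh_def opsub_def algebra_simps)

lemma bop_apply:
  "bop \<alpha> w Rs Rm Rd Rw A f t = of_real (A t) / w t *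
     (Rs t / Rd (t-1) * Rw (t-1+\<alpha>) * f (t-1+\<alpha>) / of_real (A (t-1+\<alpha>))
      - Rm t / Rd t * Rw (t+\<alpha>) * f (t+\<alpha>) / of_real (A (t+\<alpha>)))"
  by (simp add: bop_def Mul_def Esh_def opsub_def algebra_simps)

lemma frakH_apply:
  "A s \<noteq> 0 \<Longrightarrow> frakH sg sr dx nx w Rs Rm A f s = 1 / w s * of_real (A s) *
     (- (Rm (s-1) * Rs s / nx s) * f (s-1) / of_real (A (s-1))
      - (Rm s * Rs (s+1) / dx s) * f (s+1) / of_real (A (s+1))
      + (sr s / dx s + sg s / nx s) * f s / of_real (A s))"
  by (simp add: frakH_def Hop_def Mul_def Esh_def opsub_def opadd_def opneg_def algebra_simps)
     (simp add: field_simps)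

locale factorization_data =
  fixes \<alpha> :: real and sg sr dx nx w Rs Rm Rd Rw :: "real \<Rightarrow> complex" and A :: "real \<Rightarrow> real"
  assumes A_nonzero: "A t \<noteq> 0"
    and sg_square: "sg t = (Rs t)\<^sup>2" and sr_square: "sr t = (Rm t)\<^sup>2"
    and dx_square: "dx t = (Rd t)\<^sup>2" and w_square: "w t = (Rw t)\<^sup>2"
    and nx_shift: "nx t = dx (t - 1)"
begin

abbreviation D where "D \<equiv> gooddom \<alpha> sg sr dx w"
abbreviation a where "a \<equiv> aop \<alpha> Rs Rm Rd Rw A"
abbreviation b where "b \<equiv> bop \<alpha> w Rs Rm Rd Rw A"

definition ba_lower :: "real \<Rightarrow> complex" where
  "ba_lower s = - of_real (A s) * Rs s * Rm (s-1) / (w s * dx (s-1) * of_real (A (s-1)))"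

definition ba_upper :: "real \<Rightarrow> complex" where
  "ba_upper s = - of_real (A s) * Rm s * Rs (s+1) / (w s * dx s * of_real (A (s+1)))"

definition ba_diag :: "real \<Rightarrow> complex" where
  "ba_diag s = 1 / w s * (sg s / nx s + sr s / dx s)"

definition ab_diag :: "real \<Rightarrow> complex" where
  "ab_diag s = 1 / dx (s - \<alpha>) * (sg (s - \<alpha> + 1) / w (s - \<alpha> + 1) + sr (s - \<alpha>) / w (s - \<alpha>))"

definition offdiag_ratio :: "real \<Rightarrow> complex" where
  "offdiag_ratio s = nx s / w (s - \<alpha>) * (Rw (s - 1) * Rw s / (Rd (s - \<alpha> - 1) * Rd (s - \<alpha>)))
               * (Rs (s - \<alpha>) * Rm (s - \<alpha>) / (Rs s * Rm (s - 1)))"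

lemma nondeg_iff_roots_nonzero:
  "nondeg sg sr dx w t \<longleftrightarrow> Rs t \<noteq> 0 \<and> Rm t \<noteq> 0 \<and> Rd t \<noteq> 0 \<and> Rw t \<noteq> 0"
  by (simp add: nondeg_def sg_square sr_square dx_square w_square)

lemma roots_nonzero_around:
  assumes "s \<in> D"
  shows "Rs s \<noteq> 0" "Rm s \<noteq> 0" "Rd s \<noteq> 0" "Rw s \<noteq> 0"
    "Rs (s+1) \<noteq> 0" "Rw (s+1) \<noteq> 0" "Rm (s-1) \<noteq> 0" "Rd (s-1) \<noteq> 0" "Rw (s-1) \<noteq> 0"
    "Rw (s-1+\<alpha>) \<noteq> 0" "Rw (s+\<alpha>) \<noteq> 0"
    "Rd (s-\<alpha>) \<noteq> 0" "Rd (s-\<alpha>-1) \<noteq> 0" "Rd (s-\<alpha>+1) \<noteq> 0"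
    "Rw (s-\<alpha>) \<noteq> 0" "Rw (s-\<alpha>+1) \<noteq> 0"
proof -
  have nz: "Rs t \<noteq> 0 \<and> Rm t \<noteq> 0 \<and> Rd t \<noteq> 0 \<and> Rw t \<noteq> 0"
    if "t = s + of_int m + of_int n * \<alpha>" for t m n
    using gooddom_nondeg[OF assms, of m n] that by (simp add: nondeg_iff_roots_nonzero)
  show "Rs s \<noteq> 0" "Rm s \<noteq> 0" "Rd s \<noteq> 0" "Rw s \<noteq> 0" using nz[of s 0 0] by simp_all
  show "Rs (s+1) \<noteq> 0" "Rw (s+1) \<noteq> 0" using nz[of "s+1" 1 0] by simp_all
  show "Rm (s-1) \<noteq> 0" "Rd (s-1) \<noteq> 0" "Rw (s-1) \<noteq> 0" using nz[of "s-1" "-1" 0] by simp_all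
  show "Rw (s-1+\<alpha>) \<noteq> 0" using nz[of "s-1+\<alpha>" "-1" 1] by simp
  show "Rw (s+\<alpha>) \<noteq> 0" using nz[of "s+\<alpha>" 0 1] by simp
  show "Rd (s-\<alpha>) \<noteq> 0" "Rw (s-\<alpha>) \<noteq> 0" using nz[of "s-\<alpha>" 0 "-1"] by simp_all
  show "Rd (s-\<alpha>-1) \<noteq> 0" using nz[of "s-\<alpha>-1" "-1" "-1"] by simp
  show "Rd (s-\<alpha>+1) \<noteq> 0" "Rw (s-\<alpha>+1) \<noteq> 0" using nz[of "s-\<alpha>+1" 1 "-1"] by simp_all
qed

lemma frakH_eq_tridiag:
  "s \<in> D \<Longrightarrow> frakH sg sr dx nx w Rs Rm A f s = tridiag ba_lower ba_diag ba_upper f s"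
  using roots_nonzero_around A_nonzero[of s]
  by (simp add: frakH_apply tridiag_def ba_lower_def ba_upper_def ba_diag_def nx_shift
      sg_square sr_square dx_square w_square field_simps)

lemma ba_eq_tridiag:
  assumes "s \<in> D"
  shows "b (a f) s = tridiag ba_lower ba_diag ba_upper f s"
proof -
  have "b (a f) s = of_real (A s) / w s *
      (Rs s / Rd (s-1) * (Rs s / Rd (s-1) * f s / of_real (A s)
         - Rm (s-1) / Rd (s-1) * f (s-1) / of_real (A (s-1)))
       - Rm s / Rd s * (Rs (s+1) / Rd s * f (s+1) / of_real (A (s+1))
         - Rm s / Rd s * f s / of_real (A s)))"
    using roots_nonzero_around[OF assms] A_nonzero[of "s-1+\<alpha>"] A_nonzero[of "s+\<alpha>"]
    by (simp add: bop_apply aop_apply add.commute)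
  also have "\<dots> = tridiag ba_lower ba_diag ba_upper f s"
    using roots_nonzero_around[OF assms] A_nonzero[of s]
    by (simp add: tridiag_def ba_lower_def ba_upper_def ba_diag_def nx_shift
        sg_square sr_square dx_square w_square field_simps power2_eq_square)
  finally show ?thesis .
qed

lemma ab_eq_tridiag:
  assumes "s \<in> D"
  shows "a (b f) s
    = tridiag (\<lambda>s. offdiag_ratio s * ba_lower s) ab_diag (\<lambda>s. offdiag_ratio (s+1) * ba_upper s) f s"
proof -
  note nz = roots_nonzero_around[OF assms]
  have b_at_next: "b f (s-\<alpha>+1) = of_real (A (s-\<alpha>+1)) / w (s-\<alpha>+1) *
       (Rs (s-\<alpha>+1) / Rd (s-\<alpha>) * Rw s * f s / of_real (A s)
        - Rm (s-\<alpha>+1) / Rd (s-\<alpha>+1) * Rw (s+1) * f (s+1) / of_real (A (s+1)))"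
    by (simp add: bop_apply algebra_simps)
  have b_at: "b f (s-\<alpha>) = of_real (A (s-\<alpha>)) / w (s-\<alpha>) *
       (Rs (s-\<alpha>) / Rd (s-\<alpha>-1) * Rw (s-1) * f (s-1) / of_real (A (s-1))
        - Rm (s-\<alpha>) / Rd (s-\<alpha>) * Rw s * f s / of_real (A s))"
    by (simp add: bop_apply algebra_simps)
  have "a (b f) s = of_real (A s) / Rw s *
      (Rs (s-\<alpha>+1) / Rd (s-\<alpha>) / w (s-\<alpha>+1) *
         (Rs (s-\<alpha>+1) / Rd (s-\<alpha>) * Rw s * f s / of_real (A s)
          - Rm (s-\<alpha>+1) / Rd (s-\<alpha>+1) * Rw (s+1) * f (s+1) / of_real (A (s+1)))
       - Rm (s-\<alpha>) / Rd (s-\<alpha>) / w (s-\<alpha>) *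
         (Rs (s-\<alpha>) / Rd (s-\<alpha>-1) * Rw (s-1) * f (s-1) / of_real (A (s-1))
          - Rm (s-\<alpha>) / Rd (s-\<alpha>) * Rw s * f s / of_real (A s)))"
    unfolding aop_apply[of _ _ _ _ _ _ _ s] b_at_next b_at
    using nz by (simp add: A_nonzero w_square field_simps)
  also have "\<dots>
      = tridiag (\<lambda>s. offdiag_ratio s * ba_lower s) ab_diag (\<lambda>s. offdiag_ratio (s+1) * ba_upper s) f s"
    using nz A_nonzero[of s]
    by (simp add: tridiag_def ba_lower_def ba_upper_def ab_diag_def offdiag_ratio_def nx_shift
        sg_square sr_square dx_square w_square field_simps power2_eq_square)
  finally show ?thesis .
qed

lemma factorization: "s \<in> D \<Longrightarrow> frakH sg sr dx nx w Rs Rm A f s = b (a f) s"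
  by (simp add: frakH_eq_tridiag ba_eq_tridiag)

lemma commutation_iff:
  "(\<forall>f. \<forall>s\<in>D. a (b f) s - of_real vs * b (a f) s = of_real Lam * f s)
     \<longleftrightarrow> (\<forall>s\<in>D. offdiag_ratio s = of_real vs)
       \<and> (\<forall>s\<in>D. ab_diag s - of_real vs * ba_diag s = of_real Lam)"
proof -
  have "a (b f) s - of_real vs * b (a f) s = tridiag
      (\<lambda>s. (offdiag_ratio s - of_real vs) * ba_lower s)
      (\<lambda>s. ab_diag s - of_real vs * ba_diag s)
      (\<lambda>s. (offdiag_ratio (s+1) - of_real vs) * ba_upper s) f s" if "s \<in> D" for f s
    using that by (simp add: ab_eq_tridiag ba_eq_tridiag tridiag_def algebra_simps)
  moreover have "ba_lower s \<noteq> 0" "ba_upper s \<noteq> 0" if "s \<in> D" for s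
    using roots_nonzero_around[OF that] A_nonzero
    by (simp_all add: ba_lower_def ba_upper_def dx_square w_square)
  moreover have "\<forall>s\<in>D. offdiag_ratio (s+1) = of_real vs" if "\<forall>s\<in>D. offdiag_ratio s = of_real vs"
    using that gooddom_add_one by blast
  ultimately show ?thesis
    by (simp add: tridiag_eq_scalar_iff cong: ball_cong) blast
qed

end

theorem theorem2:
  fixes q c1 c2 c3 \<alpha> vs Lam :: real
    and st tt :: "real poly"
    and A :: "real \<Rightarrow> real"
    and Rs Rm Rd Rw :: "real \<Rightarrow> complex"
  assumes "q > 0" and "q \<noteq> 1"
    and "degree st \<le> 2" and "degree tt \<le> 1"
    and "continuous_on UNIV A" and "\<forall>s. A s \<noteq> 0"
    and "\<forall>s. (Rs s)\<^sup>2 = sig st tt q c1 c2 c3 s"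
    and "\<forall>s. (Rm s)\<^sup>2 = sigref st tt q c1 c2 c3 s"
    and "\<forall>s. (Rd s)\<^sup>2 = Dx (latx q c1 c2 c3) s"
    and "\<forall>s. (Rw s)\<^sup>2 = Nx1 (latx q c1 c2 c3) s"
  shows
   "let X = latx q c1 c2 c3; sg = sig st tt q c1 c2 c3; sr = sigref st tt q c1 c2 c3;
        dx = Dx X; nx = Nx X; w = Nx1 X;
        D = gooddom \<alpha> sg sr dx w;
        a = aop \<alpha> Rs Rm Rd Rw A; b = bop \<alpha> w Rs Rm Rd Rw A;
        HH = frakH sg sr dx nx w Rs Rm A
    in (\<forall>f. \<forall>s\<in>D. HH f s = b (a f) s)
     \<and> ((\<forall>f. \<forall>s\<in>D. a (b f) s - of_real vs * b (a f) s = of_real Lam * f s)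
        \<longleftrightarrow>
        (\<forall>s\<in>D. nx s / w (s - \<alpha>)
                 * (Rw (s - 1) * Rw s / (Rd (s - \<alpha> - 1) * Rd (s - \<alpha>)))
                 * (Rs (s - \<alpha>) * Rm (s - \<alpha>) / (Rs s * Rm (s - 1))) = of_real vs)
      \<and> (\<forall>s\<in>D. 1 / dx (s - \<alpha>) * (sg (s - \<alpha> + 1) / w (s - \<alpha> + 1) + sr (s - \<alpha>) / w (s - \<alpha>))
                 - of_real vs * (1 / w s) * (sg s / nx s + sr s / dx s) = of_real Lam))"
proof -
  interpret factorization_data \<alpha> "sig st tt q c1 c2 c3" "sigref st tt q c1 c2 c3"
    "Dx (latx q c1 c2 c3)" "Nx (latx q c1 c2 c3)" "Nx1 (latx q c1 c2 c3)" Rs Rm Rd Rw A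
    using assms(6-10) by unfold_locales (simp_all add: Nx_def Dx_def)
  show ?thesis
    using factorization commutation_iff[of vs Lam]
    unfolding Let_def offdiag_ratio_def ab_diag_def ba_diag_def by (simp add: mult.assoc)
qed

end
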